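(* Let $\mathcal C$ be a cartesian closed category with regular epi-mono factorizations (every arrow factors as a regular epimorphism followed by a monomorphism), and let $S$ be an object of $\mathcal C$ having at least one global element $1\to S$. Then the functor $U:\mathcal C\to\mathcal C$, $X\mapsto X^S$, is monadic: the comparison functor $K:\mathcal C\to\mathbf{Alg}^T$, $KY=(Y^S,\epsilon_Y^S)$, $Kg=g^S$, is an equivalence of categories, where $T=UF$ is the state monad of the adjunction $F\dashv U$ with $F(X)=S\times X$.
   Context: $TX=(S\times X)^S$; $\epsilon_Z:S\times Z^S\to Z$ is evaluation (the counit); for $f:S\times X\to Z$, $f^*:X\to Z^S$ is its transpose; $\eta_X=(\mathrm{id}_{S\times X})^*$, $\mu_X=(\epsilon_{S\times X})^S$. A $T$-algebra is a pair $(X,h)$ with $h:TX\to X$, $h\circ Th=h\circ\mu_X$, $h\circ\eta_X=\mathrm{id}_X$; morphisms $u:(X,h)\to(X',h')$ satisfy $h'\circ Tu=u\circ h$; these form $\mathbf{Alg}^T$. "Monadic" means $K$ is an equivalence of categories (not necessarily an isomorphism). *)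

theory Defs
  imports Main
begin

text \<open>A category: objects Obj, hom-sets Hom X Y, composition Cmp X Y Z g f (= g o f for
 f : X -> Y, g : Y -> Z), identities Idt X.\<close>

record ('o, 'a) cat =
  Obj :: "'o set"
  Hom :: "'o \<Rightarrow> 'o \<Rightarrow> 'a set"
  Cmp :: "'o \<Rightarrow> 'o \<Rightarrow> 'o \<Rightarrow> 'a \<Rightarrow> 'a \<Rightarrow> 'a"
  Idt :: "'o \<Rightarrow> 'a"

definition category :: "('o, 'a) cat \<Rightarrow> bool" where
  "category C \<longleftrightarrow>
     (\<forall>X\<in>Obj C. Idt C X \<in> Hom C X X) \<and>
     (\<forall>X\<in>Obj C. \<forall>Y\<in>Obj C. \<forall>Z\<in>Obj C. \<forall>f g.
        f \<in> Hom C X Y \<longrightarrow> g \<in> Hom C Y Z \<longrightarrow> Cmp C X Y Z g f \<in> Hom C X Z) \<and>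
     (\<forall>X\<in>Obj C. \<forall>Y\<in>Obj C. \<forall>f\<in>Hom C X Y.
        Cmp C X Y Y (Idt C Y) f = f \<and> Cmp C X X Y f (Idt C X) = f) \<and>
     (\<forall>W\<in>Obj C. \<forall>X\<in>Obj C. \<forall>Y\<in>Obj C. \<forall>Z\<in>Obj C. \<forall>f g h.
        f \<in> Hom C W X \<longrightarrow> g \<in> Hom C X Y \<longrightarrow> h \<in> Hom C Y Z \<longrightarrow>
        Cmp C W Y Z h (Cmp C W X Y g f) = Cmp C W X Z (Cmp C X Y Z h g) f)"

definition is_functor :: "('o, 'a) cat \<Rightarrow> ('p, 'b) cat \<Rightarrow> ('o \<Rightarrow> 'p) \<Rightarrow> ('o \<Rightarrow> 'o \<Rightarrow> 'a \<Rightarrow> 'b) \<Rightarrow> bool" where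
  "is_functor C D Fo Fa \<longleftrightarrow>
     (\<forall>X\<in>Obj C. Fo X \<in> Obj D) \<and>
     (\<forall>X\<in>Obj C. \<forall>Y\<in>Obj C. \<forall>f\<in>Hom C X Y. Fa X Y f \<in> Hom D (Fo X) (Fo Y)) \<and>
     (\<forall>X\<in>Obj C. Fa X X (Idt C X) = Idt D (Fo X)) \<and>
     (\<forall>X\<in>Obj C. \<forall>Y\<in>Obj C. \<forall>Z\<in>Obj C. \<forall>f g.
        f \<in> Hom C X Y \<longrightarrow> g \<in> Hom C Y Z \<longrightarrow>
        Fa X Z (Cmp C X Y Z g f) = Cmp D (Fo X) (Fo Y) (Fo Z) (Fa Y Z g) (Fa X Y f))"

definition iso :: "('o, 'a) cat \<Rightarrow> 'o \<Rightarrow> 'o \<Rightarrow> 'a \<Rightarrow> bool" where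
  "iso C X Y f \<longleftrightarrow> f \<in> Hom C X Y \<and>
     (\<exists>g\<in>Hom C Y X. Cmp C X Y X g f = Idt C X \<and> Cmp C Y X Y f g = Idt C Y)"

definition nat_iso :: "('o, 'a) cat \<Rightarrow> ('p, 'b) cat \<Rightarrow>
    ('o \<Rightarrow> 'p) \<Rightarrow> ('o \<Rightarrow> 'o \<Rightarrow> 'a \<Rightarrow> 'b) \<Rightarrow>
    ('o \<Rightarrow> 'p) \<Rightarrow> ('o \<Rightarrow> 'o \<Rightarrow> 'a \<Rightarrow> 'b) \<Rightarrow> ('o \<Rightarrow> 'b) \<Rightarrow> bool" where
  "nat_iso C D Fo Fa Go Ga \<alpha> \<longleftrightarrow>
     (\<forall>X\<in>Obj C. iso D (Fo X) (Go X) (\<alpha> X)) \<and>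
     (\<forall>X\<in>Obj C. \<forall>Y\<in>Obj C. \<forall>f\<in>Hom C X Y.
        Cmp D (Fo X) (Go X) (Go Y) (Ga X Y f) (\<alpha> X) =
        Cmp D (Fo X) (Fo Y) (Go Y) (\<alpha> Y) (Fa X Y f))"

definition equivalence :: "('o, 'a) cat \<Rightarrow> ('p, 'b) cat \<Rightarrow> ('o \<Rightarrow> 'p) \<Rightarrow> ('o \<Rightarrow> 'o \<Rightarrow> 'a \<Rightarrow> 'b) \<Rightarrow> bool" where
  "equivalence C D Fo Fa \<longleftrightarrow> is_functor C D Fo Fa \<and>
     (\<exists>(Go :: 'p \<Rightarrow> 'o) (Ga :: 'p \<Rightarrow> 'p \<Rightarrow> 'b \<Rightarrow> 'a) (\<alpha> :: 'o \<Rightarrow> 'a) (\<beta> :: 'p \<Rightarrow> 'b).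
        is_functor D C Go Ga \<and>
        nat_iso C C (\<lambda>X. X) (\<lambda>X Y f. f) (\<lambda>X. Go (Fo X)) (\<lambda>X Y f. Ga (Fo X) (Fo Y) (Fa X Y f)) \<alpha> \<and>
        nat_iso D D (\<lambda>X. Fo (Go X)) (\<lambda>X Y f. Fa (Go X) (Go Y) (Ga X Y f)) (\<lambda>X. X) (\<lambda>X Y f. f) \<beta>)"

definition mono :: "('o, 'a) cat \<Rightarrow> 'o \<Rightarrow> 'o \<Rightarrow> 'a \<Rightarrow> bool" where
  "mono C A B m \<longleftrightarrow> m \<in> Hom C A B \<and>
     (\<forall>X\<in>Obj C. \<forall>g\<in>Hom C X A. \<forall>h\<in>Hom C X A. Cmp C X A B m g = Cmp C X A B m h \<longrightarrow> g = h)"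

definition regular_epi :: "('o, 'a) cat \<Rightarrow> 'o \<Rightarrow> 'o \<Rightarrow> 'a \<Rightarrow> bool" where
  "regular_epi C B E e \<longleftrightarrow> e \<in> Hom C B E \<and>
     (\<exists>A\<in>Obj C. \<exists>f\<in>Hom C A B. \<exists>g\<in>Hom C A B.
        Cmp C A B E e f = Cmp C A B E e g \<and>
        (\<forall>Z\<in>Obj C. \<forall>k\<in>Hom C B Z. Cmp C A B Z k f = Cmp C A B Z k g \<longrightarrow>
           (\<exists>!u. u \<in> Hom C E Z \<and> Cmp C B E Z u e = k)))"

definition has_regular_epi_mono_factorizations :: "('o, 'a) cat \<Rightarrow> bool" where
  "has_regular_epi_mono_factorizations C \<longleftrightarrow>
     (\<forall>A\<in>Obj C. \<forall>B\<in>Obj C. \<forall>f\<in>Hom C A B.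
        \<exists>E\<in>Obj C. \<exists>e m. regular_epi C A E e \<and> mono C E B m \<and> Cmp C A E B m e = f)"

text \<open>prd A B = A \<times> B with projections pr1, pr2; ex Y Z = Z^Y with evaluation
  evl Y Z : Y \<times> Z^Y -> Z.\<close>
record ('o, 'a) ccc_data =
  one :: 'o
  prd :: "'o \<Rightarrow> 'o \<Rightarrow> 'o"
  pr1 :: "'o \<Rightarrow> 'o \<Rightarrow> 'a"
  pr2 :: "'o \<Rightarrow> 'o \<Rightarrow> 'a"
  ex  :: "'o \<Rightarrow> 'o \<Rightarrow> 'o"
  evl :: "'o \<Rightarrow> 'o \<Rightarrow> 'a"

definition pair :: "('o, 'a) cat \<Rightarrow> ('o, 'a) ccc_data \<Rightarrow> 'o \<Rightarrow> 'o \<Rightarrow> 'o \<Rightarrow> 'a \<Rightarrow> 'a \<Rightarrow> 'a" where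
  "pair C D A B X f g = (THE h. h \<in> Hom C X (prd D A B) \<and>
      Cmp C X (prd D A B) A (pr1 D A B) h = f \<and> Cmp C X (prd D A B) B (pr2 D A B) h = g)"

definition prodmap :: "('o, 'a) cat \<Rightarrow> ('o, 'a) ccc_data \<Rightarrow> 'o \<Rightarrow> 'o \<Rightarrow> 'o \<Rightarrow> 'o \<Rightarrow> 'a \<Rightarrow> 'a \<Rightarrow> 'a" where
  "prodmap C D A B A' B' f g = pair C D A' B' (prd D A B)
      (Cmp C (prd D A B) A A' f (pr1 D A B)) (Cmp C (prd D A B) B B' g (pr2 D A B))"

definition cartesian_closed :: "('o, 'a) cat \<Rightarrow> ('o, 'a) ccc_data \<Rightarrow> bool" where
  "cartesian_closed C D \<longleftrightarrow>
     one D \<in> Obj C \<and> (\<forall>X\<in>Obj C. \<exists>!f. f \<in> Hom C X (one D)) \<and>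
     (\<forall>A\<in>Obj C. \<forall>B\<in>Obj C. prd D A B \<in> Obj C \<and>
        pr1 D A B \<in> Hom C (prd D A B) A \<and> pr2 D A B \<in> Hom C (prd D A B) B \<and>
        (\<forall>X\<in>Obj C. \<forall>f\<in>Hom C X A. \<forall>g\<in>Hom C X B.
           \<exists>!h. h \<in> Hom C X (prd D A B) \<and>
              Cmp C X (prd D A B) A (pr1 D A B) h = f \<and> Cmp C X (prd D A B) B (pr2 D A B) h = g)) \<and>
     (\<forall>Y\<in>Obj C. \<forall>Z\<in>Obj C. ex D Y Z \<in> Obj C \<and>
        evl D Y Z \<in> Hom C (prd D Y (ex D Y Z)) Z \<and>
        (\<forall>X\<in>Obj C. \<forall>f\<in>Hom C (prd D Y X) Z.
           \<exists>!g. g \<in> Hom C X (ex D Y Z) \<and>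
              Cmp C (prd D Y X) (prd D Y (ex D Y Z)) Z (evl D Y Z)
                 (prodmap C D Y X Y (ex D Y Z) (Idt C Y) g) = f))"

definition transp :: "('o, 'a) cat \<Rightarrow> ('o, 'a) ccc_data \<Rightarrow> 'o \<Rightarrow> 'o \<Rightarrow> 'o \<Rightarrow> 'a \<Rightarrow> 'a" where
  "transp C D Y X Z f = (THE g. g \<in> Hom C X (ex D Y Z) \<and>
      Cmp C (prd D Y X) (prd D Y (ex D Y Z)) Z (evl D Y Z)
         (prodmap C D Y X Y (ex D Y Z) (Idt C Y) g) = f)"

definition expmap :: "('o, 'a) cat \<Rightarrow> ('o, 'a) ccc_data \<Rightarrow> 'o \<Rightarrow> 'o \<Rightarrow> 'o \<Rightarrow> 'a \<Rightarrow> 'a" where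
  "expmap C D S Z Z' u = transp C D S (ex D S Z) Z'
      (Cmp C (prd D S (ex D S Z)) Z Z' u (evl D S Z))"

definition Tob :: "('o, 'a) ccc_data \<Rightarrow> 'o \<Rightarrow> 'o \<Rightarrow> 'o" where
  "Tob D S X = ex D S (prd D S X)"

definition Tar :: "('o, 'a) cat \<Rightarrow> ('o, 'a) ccc_data \<Rightarrow> 'o \<Rightarrow> 'o \<Rightarrow> 'o \<Rightarrow> 'a \<Rightarrow> 'a" where
  "Tar C D S X X' u = expmap C D S (prd D S X) (prd D S X') (prodmap C D S X S X' (Idt C S) u)"

definition unitT :: "('o, 'a) cat \<Rightarrow> ('o, 'a) ccc_data \<Rightarrow> 'o \<Rightarrow> 'o \<Rightarrow> 'a" where
  "unitT C D S X = transp C D S X (prd D S X) (Idt C (prd D S X))"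

definition multT :: "('o, 'a) cat \<Rightarrow> ('o, 'a) ccc_data \<Rightarrow> 'o \<Rightarrow> 'o \<Rightarrow> 'a" where
  "multT C D S X = expmap C D S (prd D S (Tob D S X)) (prd D S X) (evl D S (prd D S X))"

definition AlgT :: "('o, 'a) cat \<Rightarrow> ('o, 'a) ccc_data \<Rightarrow> 'o \<Rightarrow> ('o \<times> 'a, 'a) cat" where
  "AlgT C D S = \<lparr>
     Obj = {(X, h). X \<in> Obj C \<and> h \<in> Hom C (Tob D S X) X \<and>
              Cmp C (Tob D S (Tob D S X)) (Tob D S X) X h (Tar C D S (Tob D S X) X h) =
              Cmp C (Tob D S (Tob D S X)) (Tob D S X) X h (multT C D S X) \<and>
              Cmp C X (Tob D S X) X h (unitT C D S X) = Idt C X},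
     Hom = (\<lambda>(X, h) (X', h'). {u \<in> Hom C X X'.
              Cmp C (Tob D S X) (Tob D S X') X' h' (Tar C D S X X' u) =
              Cmp C (Tob D S X) X X' u h}),
     Cmp = (\<lambda>(X, h) (Y, k) (Z, l) g f. Cmp C X Y Z g f),
     Idt = (\<lambda>(X, h). Idt C X) \<rparr>"

definition Kob :: "('o, 'a) cat \<Rightarrow> ('o, 'a) ccc_data \<Rightarrow> 'o \<Rightarrow> 'o \<Rightarrow> 'o \<times> 'a" where
  "Kob C D S Y = (ex D S Y, expmap C D S (prd D S (ex D S Y)) Y (evl D S Y))"

definition Kar :: "('o, 'a) cat \<Rightarrow> ('o, 'a) ccc_data \<Rightarrow> 'o \<Rightarrow> 'o \<Rightarrow> 'o \<Rightarrow> 'a \<Rightarrow> 'a" where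
  "Kar C D S Y Y' g = expmap C D S Y Y' g"

end

theory Submission
  imports Defs
begin

(* A global element s : 1 -> S makes K fully faithful: g is recovered from g^S by evaluating at
  constant states and at s, and the algebra law forces a map u : Y^S -> Y'^S of free algebras
  to send constant states to constant states, so u is the image of its evaluation at s.
  For essential surjectivity, an algebra (X, h) carries the map x |-> h (\<lambda>_. (s, x)), which is
  idempotent by the associativity law; a regular epi-mono factorisation splits it as m q with
  q m = 1, and then phi x = (\<lambda>a. q (h (\<lambda>_. (a, x)))) and psi f = h (\<lambda>a. (a, m (f a))) are
  mutually inverse algebra maps between (X, h) and K Y. *)

section \<open>Categories\<close>

locale category_ctx =
  fixes C :: "('o, 'a) cat"
  assumes category: "category C"
begin

lemma Idt_hom [simp]: "X \<in> Obj C \<Longrightarrow> Idt C X \<in> Hom C X X"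
  using category unfolding category_def by blast

lemma Cmp_hom [simp]:
  "\<lbrakk>X \<in> Obj C; Y \<in> Obj C; Z \<in> Obj C; f \<in> Hom C X Y; g \<in> Hom C Y Z\<rbrakk>
   \<Longrightarrow> Cmp C X Y Z g f \<in> Hom C X Z"
  using category unfolding category_def by blast

lemma Cmp_Idt_left [simp]:
  "\<lbrakk>X \<in> Obj C; Y \<in> Obj C; f \<in> Hom C X Y\<rbrakk> \<Longrightarrow> Cmp C X Y Y (Idt C Y) f = f"
  using category unfolding category_def by blast

lemma Cmp_Idt_right [simp]:
  "\<lbrakk>X \<in> Obj C; Y \<in> Obj C; f \<in> Hom C X Y\<rbrakk> \<Longrightarrow> Cmp C X X Y f (Idt C X) = f"
  using category unfolding category_def by blast

lemma Cmp_assoc [simp]: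
  "\<lbrakk>W \<in> Obj C; X \<in> Obj C; Y \<in> Obj C; Z \<in> Obj C;
    f \<in> Hom C W X; g \<in> Hom C X Y; h \<in> Hom C Y Z\<rbrakk>
   \<Longrightarrow> Cmp C W X Z (Cmp C X Y Z h g) f = Cmp C W Y Z h (Cmp C W X Y g f)"
  using category unfolding category_def by metis

lemma Cmp_retraction_cancel:
  "\<lbrakk>W \<in> Obj C; X \<in> Obj C; Y \<in> Obj C; f \<in> Hom C W X; g \<in> Hom C X Y; r \<in> Hom C Y X;
    Cmp C X Y X r g = Idt C X\<rbrakk>
   \<Longrightarrow> Cmp C W Y X r (Cmp C W X Y g f) = f"
  by (metis Cmp_assoc Cmp_Idt_left)

lemma regular_epi_cancel:
  assumes q: "regular_epi C B E q" and objs: "B \<in> Obj C" "E \<in> Obj C" "Z \<in> Obj C"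
    and u: "u \<in> Hom C E Z" and v: "v \<in> Hom C E Z" and uv: "Cmp C B E Z u q = Cmp C B E Z v q"
  shows "u = v"
proof -
  obtain A f g where A: "A \<in> Obj C" and f: "f \<in> Hom C A B" and g: "g \<in> Hom C A B"
    and coequalizes: "Cmp C A B E q f = Cmp C A B E q g"
    and universal: "\<forall>Z\<in>Obj C. \<forall>k\<in>Hom C B Z. Cmp C A B Z k f = Cmp C A B Z k g \<longrightarrow>
                      (\<exists>!u. u \<in> Hom C E Z \<and> Cmp C B E Z u q = k)"
    using q unfolding regular_epi_def by blast
  have q_hom: "q \<in> Hom C B E"
    using q unfolding regular_epi_def by blast
  let ?k = "Cmp C B E Z u q"
  have "Cmp C A B Z ?k f = Cmp C A B Z ?k g"
    using objs A f g u q_hom coequalizes by simp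
  moreover have "?k \<in> Hom C B Z"
    using objs u q_hom by simp
  ultimately have "\<exists>!w. w \<in> Hom C E Z \<and> Cmp C B E Z w q = ?k"
    using universal objs by blast
  then show ?thesis using u v uv by metis
qed

text \<open>The image factorisation of an idempotent e = m q splits it: from m q m q = m q and m mono
  we get q m q = q, and q being epi gives q m = 1.\<close>

lemma idempotent_splits:
  assumes factorizations: "has_regular_epi_mono_factorizations C"
    and X: "X \<in> Obj C" and e: "e \<in> Hom C X X" and idem: "Cmp C X X X e e = e"
  obtains Y q m where "Y \<in> Obj C" "q \<in> Hom C X Y" "m \<in> Hom C Y X"
    "Cmp C Y X Y q m = Idt C Y" "Cmp C X Y X m q = e"
proof -
  obtain Y q m where Y: "Y \<in> Obj C" and q: "regular_epi C X Y q" and m: "mono C Y X m"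
    and mq: "Cmp C X Y X m q = e"
    using factorizations X e unfolding has_regular_epi_mono_factorizations_def by blast
  have q_hom: "q \<in> Hom C X Y" using q unfolding regular_epi_def by blast
  have m_hom: "m \<in> Hom C Y X" using m unfolding mono_def by blast
  have "Cmp C X Y X m (Cmp C X X Y q (Cmp C X Y X m q)) = Cmp C X X X (Cmp C X Y X m q) (Cmp C X Y X m q)"
    using X Y q_hom m_hom by simp
  also have "\<dots> = Cmp C X Y X m q"
    using idem mq by simp
  finally have "Cmp C X Y X m (Cmp C X X Y q (Cmp C X Y X m q)) = Cmp C X Y X m q" .
  then have "Cmp C X X Y q (Cmp C X Y X m q) = q"
    using m X Y q_hom m_hom unfolding mono_def by simp
  then have "Cmp C X Y Y (Cmp C Y X Y q m) q = Cmp C X Y Y (Idt C Y) q"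
    using X Y q_hom m_hom by simp
  then have "Cmp C Y X Y q m = Idt C Y"
    by (rule regular_epi_cancel[OF q X Y Y, rotated 2]) (use X Y q_hom m_hom in simp_all)
  then show thesis using that Y q_hom m_hom mq by blast
qed

end

section \<open>Full, faithful and essentially surjective functors\<close>

definition faithful :: "('o, 'a) cat \<Rightarrow> ('o \<Rightarrow> 'o \<Rightarrow> 'a \<Rightarrow> 'b) \<Rightarrow> bool" where
  "faithful C Fa \<longleftrightarrow>
     (\<forall>X\<in>Obj C. \<forall>Y\<in>Obj C. \<forall>f\<in>Hom C X Y. \<forall>g\<in>Hom C X Y. Fa X Y f = Fa X Y g \<longrightarrow> f = g)"

definition full :: "('o, 'a) cat \<Rightarrow> ('p, 'b) cat \<Rightarrow> ('o \<Rightarrow> 'p) \<Rightarrow> ('o \<Rightarrow> 'o \<Rightarrow> 'a \<Rightarrow> 'b) \<Rightarrow> bool" where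
  "full C B Fo Fa \<longleftrightarrow>
     (\<forall>X\<in>Obj C. \<forall>Y\<in>Obj C. \<forall>g\<in>Hom B (Fo X) (Fo Y). \<exists>f\<in>Hom C X Y. Fa X Y f = g)"

definition essentially_surjective :: "('o, 'a) cat \<Rightarrow> ('p, 'b) cat \<Rightarrow> ('o \<Rightarrow> 'p) \<Rightarrow> bool" where
  "essentially_surjective C B Fo \<longleftrightarrow> (\<forall>b\<in>Obj B. \<exists>X\<in>Obj C. \<exists>\<phi>. iso B (Fo X) b \<phi>)"

locale fully_faithful_eso_functor =
  dom: category_ctx C + cod: category_ctx B
  for C :: "('o, 'a) cat" and B :: "('p, 'b) cat" +
  fixes Fo :: "'o \<Rightarrow> 'p" and Fa :: "'o \<Rightarrow> 'o \<Rightarrow> 'a \<Rightarrow> 'b"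
  assumes F_functor: "is_functor C B Fo Fa"
    and F_faithful: "faithful C Fa" and F_full: "full C B Fo Fa"
    and F_eso: "essentially_surjective C B Fo"
begin

lemma Fo_obj [simp]: "X \<in> Obj C \<Longrightarrow> Fo X \<in> Obj B"
  using F_functor unfolding is_functor_def by blast

lemma Fa_hom [simp]:
  "\<lbrakk>X \<in> Obj C; Y \<in> Obj C; f \<in> Hom C X Y\<rbrakk> \<Longrightarrow> Fa X Y f \<in> Hom B (Fo X) (Fo Y)"
  using F_functor unfolding is_functor_def by blast

lemma Fa_Idt: "X \<in> Obj C \<Longrightarrow> Fa X X (Idt C X) = Idt B (Fo X)"
  using F_functor unfolding is_functor_def by blast

lemma Fa_Cmp:
  "\<lbrakk>X \<in> Obj C; Y \<in> Obj C; Z \<in> Obj C; f \<in> Hom C X Y; g \<in> Hom C Y Z\<rbrakk>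
   \<Longrightarrow> Fa X Z (Cmp C X Y Z g f) = Cmp B (Fo X) (Fo Y) (Fo Z) (Fa Y Z g) (Fa X Y f)"
  using F_functor unfolding is_functor_def by blast

lemma Fa_inject:
  "\<lbrakk>X \<in> Obj C; Y \<in> Obj C; f \<in> Hom C X Y; g \<in> Hom C X Y; Fa X Y f = Fa X Y g\<rbrakk> \<Longrightarrow> f = g"
  using F_faithful unfolding faithful_def by blast

definition preimage :: "'o \<Rightarrow> 'o \<Rightarrow> 'b \<Rightarrow> 'a" where
  "preimage X Y g = (THE f. f \<in> Hom C X Y \<and> Fa X Y f = g)"

lemma preimage:
  assumes "X \<in> Obj C" "Y \<in> Obj C" "g \<in> Hom B (Fo X) (Fo Y)"
  shows preimage_hom [simp]: "preimage X Y g \<in> Hom C X Y"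
    and Fa_preimage [simp]: "Fa X Y (preimage X Y g) = g"
proof -
  have "\<exists>!f. f \<in> Hom C X Y \<and> Fa X Y f = g"
    using F_full F_faithful assms unfolding full_def faithful_def by metis
  then have "preimage X Y g \<in> Hom C X Y \<and> Fa X Y (preimage X Y g) = g"
    unfolding preimage_def by (rule theI')
  then show "preimage X Y g \<in> Hom C X Y" "Fa X Y (preimage X Y g) = g" by blast+
qed

definition G_obj :: "'p \<Rightarrow> 'o" where
  "G_obj b = (SOME X. X \<in> Obj C \<and> (\<exists>\<phi>. iso B (Fo X) b \<phi>))"

definition counit :: "'p \<Rightarrow> 'b" where
  "counit b = (SOME \<phi>. iso B (Fo (G_obj b)) b \<phi>)"

definition counit_inv :: "'p \<Rightarrow> 'b" where
  "counit_inv b = (SOME \<psi>. \<psi> \<in> Hom B b (Fo (G_obj b)) \<and>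
     Cmp B (Fo (G_obj b)) b (Fo (G_obj b)) \<psi> (counit b) = Idt B (Fo (G_obj b)) \<and>
     Cmp B b (Fo (G_obj b)) b (counit b) \<psi> = Idt B b)"

lemma G_obj_spec: "b \<in> Obj B \<Longrightarrow> G_obj b \<in> Obj C \<and> (\<exists>\<phi>. iso B (Fo (G_obj b)) b \<phi>)"
  unfolding G_obj_def by (rule someI_ex) (use F_eso in \<open>unfold essentially_surjective_def, blast\<close>)

lemma G_obj_obj [simp]: "b \<in> Obj B \<Longrightarrow> G_obj b \<in> Obj C"
  using G_obj_spec by blast

lemma iso_counit: "b \<in> Obj B \<Longrightarrow> iso B (Fo (G_obj b)) b (counit b)"
  unfolding counit_def by (rule someI_ex) (use G_obj_spec in blast)

lemma counit_inverse:
  assumes "b \<in> Obj B"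
  shows counit_hom [simp]: "counit b \<in> Hom B (Fo (G_obj b)) b"
    and counit_inv_hom [simp]: "counit_inv b \<in> Hom B b (Fo (G_obj b))"
    and counit_inv_counit [simp]:
      "Cmp B (Fo (G_obj b)) b (Fo (G_obj b)) (counit_inv b) (counit b) = Idt B (Fo (G_obj b))"
    and counit_counit_inv [simp]: "Cmp B b (Fo (G_obj b)) b (counit b) (counit_inv b) = Idt B b"
proof -
  have "counit_inv b \<in> Hom B b (Fo (G_obj b)) \<and>
     Cmp B (Fo (G_obj b)) b (Fo (G_obj b)) (counit_inv b) (counit b) = Idt B (Fo (G_obj b)) \<and>
     Cmp B b (Fo (G_obj b)) b (counit b) (counit_inv b) = Idt B b"
    unfolding counit_inv_def by (rule someI_ex) (use iso_counit[OF assms] in \<open>auto simp: iso_def\<close>)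
  then show "counit_inv b \<in> Hom B b (Fo (G_obj b))"
    "Cmp B (Fo (G_obj b)) b (Fo (G_obj b)) (counit_inv b) (counit b) = Idt B (Fo (G_obj b))"
    "Cmp B b (Fo (G_obj b)) b (counit b) (counit_inv b) = Idt B b"
    by blast+
  show "counit b \<in> Hom B (Fo (G_obj b)) b"
    using iso_counit[OF assms] unfolding iso_def by blast
qed

lemma counit_cancel [simp]:
  "\<lbrakk>b \<in> Obj B; V \<in> Obj B; f \<in> Hom B V (Fo (G_obj b))\<rbrakk>
   \<Longrightarrow> Cmp B V b (Fo (G_obj b)) (counit_inv b) (Cmp B V (Fo (G_obj b)) b (counit b) f) = f"
  "\<lbrakk>b \<in> Obj B; V \<in> Obj B; f \<in> Hom B V b\<rbrakk>
   \<Longrightarrow> Cmp B V (Fo (G_obj b)) b (counit b) (Cmp B V b (Fo (G_obj b)) (counit_inv b) f) = f"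
  by (rule cod.Cmp_retraction_cancel; simp)+

definition G_arr :: "'p \<Rightarrow> 'p \<Rightarrow> 'b \<Rightarrow> 'a" where
  "G_arr b b' g = preimage (G_obj b) (G_obj b')
     (Cmp B (Fo (G_obj b)) b' (Fo (G_obj b')) (counit_inv b') (Cmp B (Fo (G_obj b)) b b' g (counit b)))"

definition unit :: "'o \<Rightarrow> 'a" where
  "unit X = preimage X (G_obj (Fo X)) (counit_inv (Fo X))"

definition unit_inv :: "'o \<Rightarrow> 'a" where
  "unit_inv X = preimage (G_obj (Fo X)) X (counit (Fo X))"

lemma G_arr_hom [simp]:
  "\<lbrakk>b \<in> Obj B; b' \<in> Obj B; g \<in> Hom B b b'\<rbrakk> \<Longrightarrow> G_arr b b' g \<in> Hom C (G_obj b) (G_obj b')"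
  and Fa_G_arr [simp]:
  "\<lbrakk>b \<in> Obj B; b' \<in> Obj B; g \<in> Hom B b b'\<rbrakk> \<Longrightarrow> Fa (G_obj b) (G_obj b') (G_arr b b' g) =
     Cmp B (Fo (G_obj b)) b' (Fo (G_obj b')) (counit_inv b') (Cmp B (Fo (G_obj b)) b b' g (counit b))"
  unfolding G_arr_def by simp_all

lemma unit_hom [simp]: "X \<in> Obj C \<Longrightarrow> unit X \<in> Hom C X (G_obj (Fo X))"
  and unit_inv_hom [simp]: "X \<in> Obj C \<Longrightarrow> unit_inv X \<in> Hom C (G_obj (Fo X)) X"
  and Fa_unit [simp]: "X \<in> Obj C \<Longrightarrow> Fa X (G_obj (Fo X)) (unit X) = counit_inv (Fo X)"
  and Fa_unit_inv [simp]: "X \<in> Obj C \<Longrightarrow> Fa (G_obj (Fo X)) X (unit_inv X) = counit (Fo X)"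
  unfolding unit_def unit_inv_def by simp_all

lemma is_functor_G: "is_functor B C G_obj G_arr"
  unfolding is_functor_def
proof (intro conjI ballI allI impI)
  fix b assume "b \<in> Obj B"
  then show "G_arr b b (Idt B b) = Idt C (G_obj b)"
    by (intro Fa_inject[of "G_obj b" "G_obj b"]) (simp_all add: Fa_Idt)
next
  fix X Y Z f g assume "X \<in> Obj B" "Y \<in> Obj B" "Z \<in> Obj B" "f \<in> Hom B X Y" "g \<in> Hom B Y Z"
  then show "G_arr X Z (Cmp B X Y Z g f) = Cmp C (G_obj X) (G_obj Y) (G_obj Z) (G_arr Y Z g) (G_arr X Y f)"
    by (intro Fa_inject[of "G_obj X" "G_obj Z"]) (simp_all add: Fa_Cmp)
qed auto

lemma nat_iso_unit:
  "nat_iso C C (\<lambda>X. X) (\<lambda>X Y f. f) (\<lambda>X. G_obj (Fo X)) (\<lambda>X Y f. G_arr (Fo X) (Fo Y) (Fa X Y f)) unit"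
  unfolding nat_iso_def iso_def
proof (intro conjI ballI)
  fix X assume X: "X \<in> Obj C"
  show "unit X \<in> Hom C X (G_obj (Fo X))" using X by simp
  have "Cmp C X (G_obj (Fo X)) X (unit_inv X) (unit X) = Idt C X"
    by (rule Fa_inject[of X X]) (use X in \<open>simp_all add: Fa_Cmp Fa_Idt\<close>)
  moreover have "Cmp C (G_obj (Fo X)) X (G_obj (Fo X)) (unit X) (unit_inv X) = Idt C (G_obj (Fo X))"
    by (rule Fa_inject[of "G_obj (Fo X)" "G_obj (Fo X)"]) (use X in \<open>simp_all add: Fa_Cmp Fa_Idt\<close>)
  ultimately show "\<exists>g\<in>Hom C (G_obj (Fo X)) X. Cmp C X (G_obj (Fo X)) X g (unit X) = Idt C X \<and>
      Cmp C (G_obj (Fo X)) X (G_obj (Fo X)) (unit X) g = Idt C (G_obj (Fo X))"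
    using X unit_inv_hom by blast
next
  fix X Y f assume "X \<in> Obj C" "Y \<in> Obj C" "f \<in> Hom C X Y"
  then show "Cmp C X (G_obj (Fo X)) (G_obj (Fo Y)) (G_arr (Fo X) (Fo Y) (Fa X Y f)) (unit X) =
      Cmp C X Y (G_obj (Fo Y)) (unit Y) f"
    by (intro Fa_inject[of X "G_obj (Fo Y)"]) (simp_all add: Fa_Cmp)
qed

lemma nat_iso_counit:
  "nat_iso B B (\<lambda>b. Fo (G_obj b)) (\<lambda>b b' g. Fa (G_obj b) (G_obj b') (G_arr b b' g)) (\<lambda>b. b) (\<lambda>b b' g. g)
     counit"
  unfolding nat_iso_def by (simp add: iso_counit)

end

theorem equivalenceI_fully_faithful_essentially_surjective:
  assumes "category C" "category B" "is_functor C B Fo Fa"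
    and "faithful C Fa" "full C B Fo Fa" "essentially_surjective C B Fo"
  shows "equivalence C B Fo Fa"
proof -
  interpret fully_faithful_eso_functor C B Fo Fa
    using assms by (simp add: fully_faithful_eso_functor_def category_ctx_def
        fully_faithful_eso_functor_axioms_def)
  show ?thesis
    unfolding equivalence_def using F_functor is_functor_G nat_iso_unit nat_iso_counit by blast
qed

section \<open>Products and exponentials\<close>

definition to_one :: "('o, 'a) cat \<Rightarrow> ('o, 'a) ccc_data \<Rightarrow> 'o \<Rightarrow> 'a" where
  "to_one C D X = (THE f. f \<in> Hom C X (one D))"

locale ccc_ctx = category_ctx C for C :: "('o, 'a) cat" +
  fixes D :: "('o, 'a) ccc_data"
  assumes cartesian_closed: "cartesian_closed C D"
begin

lemma one_obj [simp]: "one D \<in> Obj C"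
  using cartesian_closed unfolding cartesian_closed_def by blast

lemma prd_obj [simp]: "\<lbrakk>A \<in> Obj C; B \<in> Obj C\<rbrakk> \<Longrightarrow> prd D A B \<in> Obj C"
  using cartesian_closed unfolding cartesian_closed_def by blast

lemma ex_obj [simp]: "\<lbrakk>A \<in> Obj C; B \<in> Obj C\<rbrakk> \<Longrightarrow> ex D A B \<in> Obj C"
  using cartesian_closed unfolding cartesian_closed_def by blast

lemma pr1_hom [simp]: "\<lbrakk>A \<in> Obj C; B \<in> Obj C\<rbrakk> \<Longrightarrow> pr1 D A B \<in> Hom C (prd D A B) A"
  using cartesian_closed unfolding cartesian_closed_def by blast

lemma pr2_hom [simp]: "\<lbrakk>A \<in> Obj C; B \<in> Obj C\<rbrakk> \<Longrightarrow> pr2 D A B \<in> Hom C (prd D A B) B"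
  using cartesian_closed unfolding cartesian_closed_def by blast

lemma evl_hom [simp]: "\<lbrakk>A \<in> Obj C; B \<in> Obj C\<rbrakk> \<Longrightarrow> evl D A B \<in> Hom C (prd D A (ex D A B)) B"
  using cartesian_closed unfolding cartesian_closed_def by blast

lemma ex1_to_one: "X \<in> Obj C \<Longrightarrow> \<exists>!f. f \<in> Hom C X (one D)"
  using cartesian_closed unfolding cartesian_closed_def by blast

lemma to_one_hom [simp]: "X \<in> Obj C \<Longrightarrow> to_one C D X \<in> Hom C X (one D)"
  unfolding to_one_def by (rule theI', rule ex1_to_one)

lemma to_one_Cmp [simp]:
  "\<lbrakk>V \<in> Obj C; X \<in> Obj C; a \<in> Hom C V X\<rbrakk> \<Longrightarrow> Cmp C V X (one D) (to_one C D X) a = to_one C D V"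
  using ex1_to_one[of V] by (metis Cmp_hom one_obj to_one_hom)

lemma ex1_pair:
  "\<lbrakk>A \<in> Obj C; B \<in> Obj C; X \<in> Obj C; f \<in> Hom C X A; g \<in> Hom C X B\<rbrakk> \<Longrightarrow>
   \<exists>!h. h \<in> Hom C X (prd D A B) \<and>
     Cmp C X (prd D A B) A (pr1 D A B) h = f \<and> Cmp C X (prd D A B) B (pr2 D A B) h = g"
  using cartesian_closed unfolding cartesian_closed_def
  by (elim conjE) (drule bspec, assumption, drule bspec, assumption, blast)

lemma pair:
  assumes "A \<in> Obj C" "B \<in> Obj C" "X \<in> Obj C" "f \<in> Hom C X A" "g \<in> Hom C X B"
  shows pair_hom [simp]: "pair C D A B X f g \<in> Hom C X (prd D A B)"
    and pr1_pair [simp]: "Cmp C X (prd D A B) A (pr1 D A B) (pair C D A B X f g) = f"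
    and pr2_pair [simp]: "Cmp C X (prd D A B) B (pr2 D A B) (pair C D A B X f g) = g"
  using theI'[OF ex1_pair[OF assms]] unfolding pair_def by blast+

lemma pair_eta [simp]:
  "\<lbrakk>A \<in> Obj C; B \<in> Obj C; X \<in> Obj C; h \<in> Hom C X (prd D A B)\<rbrakk> \<Longrightarrow>
   pair C D A B X (Cmp C X (prd D A B) A (pr1 D A B) h) (Cmp C X (prd D A B) B (pr2 D A B) h) = h"
  unfolding pair_def by (rule the1_equality[OF ex1_pair]) auto

lemma pair_pr1_pr2 [simp]:
  "\<lbrakk>A \<in> Obj C; B \<in> Obj C\<rbrakk> \<Longrightarrow> pair C D A B (prd D A B) (pr1 D A B) (pr2 D A B) = Idt C (prd D A B)"
  using pair_eta[of A B "prd D A B" "Idt C (prd D A B)"] by simp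

lemma pair_Cmp [simp]:
  assumes "A \<in> Obj C" "B \<in> Obj C" "X \<in> Obj C" "V \<in> Obj C"
    and "f \<in> Hom C X A" "g \<in> Hom C X B" "a \<in> Hom C V X"
  shows "Cmp C V X (prd D A B) (pair C D A B X f g) a =
    pair C D A B V (Cmp C V X A f a) (Cmp C V X B g a)"
  using pair_eta[of A B V "Cmp C V X (prd D A B) (pair C D A B X f g) a"] assms
  by (simp flip: Cmp_assoc)

declare prodmap_def [simp]

lemma ex1_transp:
  "\<lbrakk>Y \<in> Obj C; Z \<in> Obj C; X \<in> Obj C; f \<in> Hom C (prd D Y X) Z\<rbrakk> \<Longrightarrow>
   \<exists>!g. g \<in> Hom C X (ex D Y Z) \<and>
     Cmp C (prd D Y X) (prd D Y (ex D Y Z)) Z (evl D Y Z) (prodmap C D Y X Y (ex D Y Z) (Idt C Y) g) = f"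
  using cartesian_closed unfolding cartesian_closed_def
  by (elim conjE) (drule bspec, assumption, drule bspec, assumption, simp del: prodmap_def)

lemma transp:
  assumes "Y \<in> Obj C" "Z \<in> Obj C" "X \<in> Obj C" "f \<in> Hom C (prd D Y X) Z"
  shows transp_hom [simp]: "transp C D Y X Z f \<in> Hom C X (ex D Y Z)"
    and evl_transp: "Cmp C (prd D Y X) (prd D Y (ex D Y Z)) Z (evl D Y Z)
      (pair C D Y (ex D Y Z) (prd D Y X) (pr1 D Y X)
         (Cmp C (prd D Y X) X (ex D Y Z) (transp C D Y X Z f) (pr2 D Y X))) = f"
  using theI'[OF ex1_transp[OF assms]] assms unfolding transp_def by simp_all

lemma transp_unique:
  assumes objs: "Y \<in> Obj C" "Z \<in> Obj C" "X \<in> Obj C" and g: "g \<in> Hom C X (ex D Y Z)"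
    and f: "Cmp C (prd D Y X) (prd D Y (ex D Y Z)) Z (evl D Y Z)
      (pair C D Y (ex D Y Z) (prd D Y X) (pr1 D Y X) (Cmp C (prd D Y X) X (ex D Y Z) g (pr2 D Y X))) = f"
  shows "g = transp C D Y X Z f"
proof -
  have "f \<in> Hom C (prd D Y X) Z"
    unfolding f[symmetric] using objs g by simp
  then show ?thesis
    unfolding transp_def using objs g f by (intro the1_equality[OF ex1_transp, symmetric]) simp_all
qed

lemma transp_evl_eta [simp]:
  "\<lbrakk>Y \<in> Obj C; Z \<in> Obj C; X \<in> Obj C; g \<in> Hom C X (ex D Y Z)\<rbrakk> \<Longrightarrow>
   transp C D Y X Z (Cmp C (prd D Y X) (prd D Y (ex D Y Z)) Z (evl D Y Z)
     (pair C D Y (ex D Y Z) (prd D Y X) (pr1 D Y X) (Cmp C (prd D Y X) X (ex D Y Z) g (pr2 D Y X)))) = g"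
  by (rule transp_unique[symmetric]) auto

lemma transp_evl [simp]:
  "\<lbrakk>Y \<in> Obj C; Z \<in> Obj C\<rbrakk> \<Longrightarrow> transp C D Y (ex D Y Z) Z (evl D Y Z) = Idt C (ex D Y Z)"
  using transp_evl_eta[of Y Z "ex D Y Z" "Idt C (ex D Y Z)"] by simp

text \<open>Oriented to push precomposition inside transp: with pair_Cmp and evl_pair_transp,
  simp then normalises composites of transposes, pairs and evaluations.\<close>

lemma transp_Cmp [simp]:
  assumes objs: "Y \<in> Obj C" "Z \<in> Obj C" "X \<in> Obj C" "V \<in> Obj C"
    and f: "f \<in> Hom C (prd D Y X) Z" and a: "a \<in> Hom C V X"
  shows "Cmp C V X (ex D Y Z) (transp C D Y X Z f) a =
    transp C D Y V Z (Cmp C (prd D Y V) (prd D Y X) Z f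
      (pair C D Y X (prd D Y V) (pr1 D Y V) (Cmp C (prd D Y V) V X a (pr2 D Y V))))"
proof (rule transp_unique)
  let ?P = "pair C D Y X (prd D Y V) (pr1 D Y V) (Cmp C (prd D Y V) V X a (pr2 D Y V))"
  let ?Q = "pair C D Y (ex D Y Z) (prd D Y X) (pr1 D Y X)
    (Cmp C (prd D Y X) X (ex D Y Z) (transp C D Y X Z f) (pr2 D Y X))"
  have "Cmp C (prd D Y V) (prd D Y (ex D Y Z)) Z (evl D Y Z)
     (pair C D Y (ex D Y Z) (prd D Y V) (pr1 D Y V)
       (Cmp C (prd D Y V) V (ex D Y Z) (Cmp C V X (ex D Y Z) (transp C D Y X Z f) a) (pr2 D Y V)))
     = Cmp C (prd D Y V) (prd D Y X) Z (Cmp C (prd D Y X) (prd D Y (ex D Y Z)) Z (evl D Y Z) ?Q) ?P"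
    using objs f a by simp
  also have "\<dots> = Cmp C (prd D Y V) (prd D Y X) Z f ?P"
    using objs f by (simp only: evl_transp)
  finally show "Cmp C (prd D Y V) (prd D Y (ex D Y Z)) Z (evl D Y Z)
     (pair C D Y (ex D Y Z) (prd D Y V) (pr1 D Y V)
       (Cmp C (prd D Y V) V (ex D Y Z) (Cmp C V X (ex D Y Z) (transp C D Y X Z f) a) (pr2 D Y V)))
     = Cmp C (prd D Y V) (prd D Y X) Z f ?P" .
qed (use objs f a in simp_all)

lemma evl_pair_transp [simp]:
  assumes objs: "Y \<in> Obj C" "Z \<in> Obj C" "V \<in> Obj C"
    and f: "f \<in> Hom C (prd D Y V) Z" and a: "a \<in> Hom C V Y"
  shows "Cmp C V (prd D Y (ex D Y Z)) Z (evl D Y Z) (pair C D Y (ex D Y Z) V a (transp C D Y V Z f)) =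
    Cmp C V (prd D Y V) Z f (pair C D Y V V a (Idt C V))"
proof -
  let ?P = "pair C D Y V V a (Idt C V)"
  let ?Q = "pair C D Y (ex D Y Z) (prd D Y V) (pr1 D Y V)
    (Cmp C (prd D Y V) V (ex D Y Z) (transp C D Y V Z f) (pr2 D Y V))"
  have "Cmp C V (prd D Y (ex D Y Z)) Z (evl D Y Z) (pair C D Y (ex D Y Z) V a (transp C D Y V Z f)) =
     Cmp C V (prd D Y V) Z (Cmp C (prd D Y V) (prd D Y (ex D Y Z)) Z (evl D Y Z) ?Q) ?P"
    using objs f a by (simp del: transp_Cmp)
  also have "\<dots> = Cmp C V (prd D Y V) Z f ?P"
    using objs f by (simp only: evl_transp)
  finally show ?thesis .
qed

end

section \<open>The state monad and the comparison functor\<close>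

text \<open>In element notation: const_state (a, x) = (\<lambda>_. (a, x)), const_state_at s x = (\<lambda>_. (s, x))
  and eval_const s u y = u (\<lambda>_. y) s.\<close>

definition const_state :: "('o, 'a) cat \<Rightarrow> ('o, 'a) ccc_data \<Rightarrow> 'o \<Rightarrow> 'o \<Rightarrow> 'a" where
  "const_state C D S X = transp C D S (prd D S X) (prd D S X) (pr2 D S (prd D S X))"

definition const_state_at :: "('o, 'a) cat \<Rightarrow> ('o, 'a) ccc_data \<Rightarrow> 'o \<Rightarrow> 'a \<Rightarrow> 'o \<Rightarrow> 'a" where
  "const_state_at C D S s X = transp C D S X (prd D S X)
     (pair C D S X (prd D S X) (Cmp C (prd D S X) (one D) S s (to_one C D (prd D S X))) (pr2 D S X))"

definition eval_const :: "('o, 'a) cat \<Rightarrow> ('o, 'a) ccc_data \<Rightarrow> 'o \<Rightarrow> 'a \<Rightarrow> 'o \<Rightarrow> 'o \<Rightarrow> 'a \<Rightarrow> 'a" where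
  "eval_const C D S s Y Y' u = Cmp C Y (prd D S (ex D S Y')) Y' (evl D S Y')
     (pair C D S (ex D S Y') Y (Cmp C Y (one D) S s (to_one C D Y))
        (Cmp C Y (ex D S Y) (ex D S Y') u (transp C D S Y Y (pr2 D S Y))))"

context ccc_ctx
begin

lemmas state_monad_defs = expmap_def Tar_def unitT_def multT_def Kob_def Kar_def

text \<open>T X is always unfolded to (S \<times> X)^S, so the hom facts below are stated in that form.\<close>

declare Tob_def [simp]

lemma expmap_hom [simp]:
  "\<lbrakk>S \<in> Obj C; X \<in> Obj C; Y \<in> Obj C; f \<in> Hom C X Y\<rbrakk> \<Longrightarrow> expmap C D S X Y f \<in> Hom C (ex D S X) (ex D S Y)"
  by (simp add: expmap_def)

lemma Tar_hom [simp]: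
  "\<lbrakk>S \<in> Obj C; X \<in> Obj C; Y \<in> Obj C; f \<in> Hom C X Y\<rbrakk> \<Longrightarrow> Tar C D S X Y f \<in> Hom C (ex D S (prd D S X)) (ex D S (prd D S Y))"
  by (simp add: state_monad_defs)

lemma Tar_Idt [simp]: "\<lbrakk>S \<in> Obj C; X \<in> Obj C\<rbrakk> \<Longrightarrow> Tar C D S X X (Idt C X) = Idt C (Tob D S X)"
  by (simp add: state_monad_defs)

lemma Tar_Cmp:
  "\<lbrakk>S \<in> Obj C; X \<in> Obj C; Y \<in> Obj C; Z \<in> Obj C; f \<in> Hom C X Y; g \<in> Hom C Y Z\<rbrakk> \<Longrightarrow>
   Tar C D S X Z (Cmp C X Y Z g f) = Cmp C (Tob D S X) (Tob D S Y) (Tob D S Z) (Tar C D S Y Z g) (Tar C D S X Y f)"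
  by (simp add: state_monad_defs)

lemma multT_hom [simp]: "\<lbrakk>S \<in> Obj C; X \<in> Obj C\<rbrakk> \<Longrightarrow> multT C D S X \<in> Hom C (ex D S (prd D S (ex D S (prd D S X)))) (ex D S (prd D S X))"
  by (simp add: state_monad_defs)

lemma const_state_hom [simp]:
  "\<lbrakk>S \<in> Obj C; X \<in> Obj C\<rbrakk> \<Longrightarrow> const_state C D S X \<in> Hom C (prd D S X) (ex D S (prd D S X))"
  by (simp add: const_state_def)

lemma AlgT_Obj_iff:
  "(X, h) \<in> Obj (AlgT C D S) \<longleftrightarrow> X \<in> Obj C \<and> h \<in> Hom C (Tob D S X) X \<and>
     Cmp C (Tob D S (Tob D S X)) (Tob D S X) X h (Tar C D S (Tob D S X) X h) =
     Cmp C (Tob D S (Tob D S X)) (Tob D S X) X h (multT C D S X) \<and>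
     Cmp C X (Tob D S X) X h (unitT C D S X) = Idt C X"
  by (simp add: AlgT_def)

lemma AlgT_Hom_iff:
  "u \<in> Hom (AlgT C D S) (X, h) (Y, k) \<longleftrightarrow> u \<in> Hom C X Y \<and>
     Cmp C (Tob D S X) (Tob D S Y) Y k (Tar C D S X Y u) = Cmp C (Tob D S X) X Y u h"
  by (simp add: AlgT_def)

lemma AlgT_Cmp: "Cmp (AlgT C D S) x y z g f = Cmp C (fst x) (fst y) (fst z) g f"
  by (cases x; cases y; cases z) (simp add: AlgT_def)

lemma AlgT_Idt: "Idt (AlgT C D S) x = Idt C (fst x)"
  by (cases x) (simp add: AlgT_def)

lemma Cmp_AlgT_hom:
  assumes S: "S \<in> Obj C" and objs: "X \<in> Obj C" "Y \<in> Obj C" "Z \<in> Obj C"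
    and h: "h \<in> Hom C (Tob D S X) X" and k: "k \<in> Hom C (Tob D S Y) Y" and l: "l \<in> Hom C (Tob D S Z) Z"
    and f: "f \<in> Hom (AlgT C D S) (X, h) (Y, k)" and g: "g \<in> Hom (AlgT C D S) (Y, k) (Z, l)"
  shows "Cmp C X Y Z g f \<in> Hom (AlgT C D S) (X, h) (Z, l)"
proof -
  have f_hom: "f \<in> Hom C X Y"
    and f_alg: "Cmp C (Tob D S X) (Tob D S Y) Y k (Tar C D S X Y f) = Cmp C (Tob D S X) X Y f h"
    using f by (auto simp: AlgT_Hom_iff)
  have g_hom: "g \<in> Hom C Y Z"
    and g_alg: "Cmp C (Tob D S Y) (Tob D S Z) Z l (Tar C D S Y Z g) = Cmp C (Tob D S Y) Y Z g k"
    using g by (auto simp: AlgT_Hom_iff)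
  have "Cmp C (Tob D S X) (Tob D S Z) Z l (Tar C D S X Z (Cmp C X Y Z g f)) =
     Cmp C (Tob D S X) (Tob D S Y) Z (Cmp C (Tob D S Y) (Tob D S Z) Z l (Tar C D S Y Z g)) (Tar C D S X Y f)"
    using S objs l f_hom g_hom by (simp add: Tar_Cmp)
  also have "\<dots> = Cmp C (Tob D S X) (Tob D S Y) Z (Cmp C (Tob D S Y) Y Z g k) (Tar C D S X Y f)"
    by (simp only: g_alg)
  also have "\<dots> = Cmp C (Tob D S X) Y Z g (Cmp C (Tob D S X) (Tob D S Y) Y k (Tar C D S X Y f))"
    using S objs k f_hom g_hom by simp
  also have "\<dots> = Cmp C (Tob D S X) Y Z g (Cmp C (Tob D S X) X Y f h)"
    by (simp only: f_alg)
  also have "\<dots> = Cmp C (Tob D S X) X Z (Cmp C X Y Z g f) h"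
    using S objs h f_hom g_hom by simp
  finally show ?thesis
    using objs f_hom g_hom by (simp add: AlgT_Hom_iff)
qed

lemma category_AlgT: assumes S: "S \<in> Obj C" shows "category (AlgT C D S)"
  unfolding category_def Ball_def split_paired_All AlgT_Cmp AlgT_Idt fst_conv
proof (intro conjI allI impI)
  fix X h Y k Z l f g
  assume "(X, h) \<in> Obj (AlgT C D S)" "(Y, k) \<in> Obj (AlgT C D S)" "(Z, l) \<in> Obj (AlgT C D S)"
    "f \<in> Hom (AlgT C D S) (X, h) (Y, k)" "g \<in> Hom (AlgT C D S) (Y, k) (Z, l)"
  then show "Cmp C X Y Z g f \<in> Hom (AlgT C D S) (X, h) (Z, l)"
    by (intro Cmp_AlgT_hom[OF S]) (simp_all add: AlgT_Obj_iff)
qed (use S in \<open>auto simp: AlgT_Obj_iff AlgT_Hom_iff\<close>)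

lemma is_functor_K: assumes S: "S \<in> Obj C" shows "is_functor C (AlgT C D S) (Kob C D S) (Kar C D S)"
  unfolding is_functor_def Kob_def Kar_def AlgT_Cmp AlgT_Idt fst_conv
  using S by (auto simp: AlgT_Obj_iff AlgT_Hom_iff state_monad_defs)

lemma AlgT_hom_Cmp:
  assumes S: "S \<in> Obj C" and objs: "X \<in> Obj C" "Y \<in> Obj C" "V \<in> Obj C"
    and h: "h \<in> Hom C (Tob D S X) X" and k: "k \<in> Hom C (Tob D S Y) Y"
    and u: "u \<in> Hom (AlgT C D S) (X, h) (Y, k)" and z: "z \<in> Hom C V (Tob D S X)"
  shows "Cmp C V X Y u (Cmp C V (Tob D S X) X h z) =
    Cmp C V (Tob D S Y) Y k (Cmp C V (Tob D S X) (Tob D S Y) (Tar C D S X Y u) z)"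
proof -
  have u_hom: "u \<in> Hom C X Y"
    and u_alg: "Cmp C (Tob D S X) (Tob D S Y) Y k (Tar C D S X Y u) = Cmp C (Tob D S X) X Y u h"
    using u by (auto simp: AlgT_Hom_iff)
  have "Cmp C V X Y u (Cmp C V (Tob D S X) X h z) = Cmp C V (Tob D S X) Y (Cmp C (Tob D S X) X Y u h) z"
    using S objs h z u_hom by simp
  also have "\<dots> = Cmp C V (Tob D S X) Y (Cmp C (Tob D S X) (Tob D S Y) Y k (Tar C D S X Y u)) z"
    by (simp only: u_alg)
  also have "\<dots> = Cmp C V (Tob D S Y) Y k (Cmp C V (Tob D S X) (Tob D S Y) (Tar C D S X Y u) z)"
    using S objs k z u_hom by simp
  finally show ?thesis .
qed

lemma inverse_AlgT_hom:
  assumes S: "S \<in> Obj C" and objs: "X \<in> Obj C" "Y \<in> Obj C"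
    and h: "h \<in> Hom C (Tob D S X) X" and k: "k \<in> Hom C (Tob D S Y) Y"
    and f: "f \<in> Hom (AlgT C D S) (X, h) (Y, k)" and g: "g \<in> Hom C Y X"
    and gf: "Cmp C X Y X g f = Idt C X" and fg: "Cmp C Y X Y f g = Idt C Y"
  shows "g \<in> Hom (AlgT C D S) (Y, k) (X, h)"
proof -
  have f_hom: "f \<in> Hom C X Y"
    and f_alg: "Cmp C (Tob D S X) (Tob D S Y) Y k (Tar C D S X Y f) = Cmp C (Tob D S X) X Y f h"
    using f by (auto simp: AlgT_Hom_iff)
  let ?TX = "ex D S (prd D S X)" and ?TY = "ex D S (prd D S Y)"
  have Tfg: "Cmp C ?TY ?TX ?TY (Tar C D S X Y f) (Tar C D S Y X g) = Idt C ?TY"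
    using Tar_Cmp[of S Y X Y g f] S objs f_hom g fg by simp
  have "Cmp C ?TY Y X g k =
     Cmp C ?TY Y X g (Cmp C ?TY ?TX Y (Cmp C ?TX ?TY Y k (Tar C D S X Y f)) (Tar C D S Y X g))"
    using S objs k f_hom g by (simp add: Tfg)
  also have "\<dots> = Cmp C ?TY ?TX X h (Tar C D S Y X g)"
    using S objs h f_hom g by (simp add: f_alg[simplified] Cmp_retraction_cancel gf)
  finally show ?thesis
    using g by (simp add: AlgT_Hom_iff)
qed

lemma eval_const_Kar:
  assumes S: "S \<in> Obj C" and s: "s \<in> Hom C (one D) S"
    and objs: "Y \<in> Obj C" "Y' \<in> Obj C" and g: "g \<in> Hom C Y Y'"
  shows "eval_const C D S s Y Y' (Kar C D S Y Y' g) = g"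
  using S s objs g by (simp add: eval_const_def state_monad_defs)

lemma faithful_K:
  assumes S: "S \<in> Obj C" and s: "s \<in> Hom C (one D) S"
  shows "faithful C (Kar C D S)"
  unfolding faithful_def by (metis eval_const_Kar[OF S s])

text \<open>The algebra law for u at const_state (a, f) gives u (\<lambda>_. f a) = (\<lambda>_. u f a);
  at the state s this says eval_const s u (f a) = u f a.\<close>

lemma Kar_eval_const:
  assumes S: "S \<in> Obj C" and s: "s \<in> Hom C (one D) S" and objs: "Y \<in> Obj C" "Y' \<in> Obj C"
    and u: "u \<in> Hom (AlgT C D S) (Kob C D S Y) (Kob C D S Y')"
  shows "Kar C D S Y Y' (eval_const C D S s Y Y' u) = u"
proof -
  let ?E = "ex D S Y" and ?E' = "ex D S Y'"
  let ?\<epsilon> = "expmap C D S (prd D S ?E) Y (evl D S Y)"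
  let ?\<epsilon>' = "expmap C D S (prd D S ?E') Y' (evl D S Y')"
  let ?\<kappa> = "const_state C D S ?E"
  have u_hom: "u \<in> Hom C ?E ?E'"
    using u by (simp add: Kob_def AlgT_Hom_iff)
  have u_alg_const: "Cmp C (prd D S ?E) ?E ?E' u (Cmp C (prd D S ?E) (Tob D S ?E) ?E ?\<epsilon> ?\<kappa>) =
    Cmp C (prd D S ?E) (Tob D S ?E') ?E' ?\<epsilon>'
      (Cmp C (prd D S ?E) (Tob D S ?E) (Tob D S ?E') (Tar C D S ?E ?E' u) ?\<kappa>)"
    by (rule AlgT_hom_Cmp[where u = u]) (use S objs u in \<open>simp_all add: Kob_def state_monad_defs\<close>)
  let ?g = "eval_const C D S s Y Y' u"
  have "Cmp C (prd D S ?E) Y Y' ?g (evl D S Y) = Cmp C (prd D S ?E) (prd D S ?E') Y' (evl D S Y')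
     (pair C D S ?E' (prd D S ?E) (Cmp C (prd D S ?E) (one D) S s (to_one C D (prd D S ?E)))
        (Cmp C (prd D S ?E) ?E ?E' u (Cmp C (prd D S ?E) (Tob D S ?E) ?E ?\<epsilon> ?\<kappa>)))"
    using S s objs u_hom by (simp add: eval_const_def state_monad_defs const_state_def)
  also have "\<dots> = Cmp C (prd D S ?E) (prd D S ?E') Y' (evl D S Y')
      (pair C D S ?E' (prd D S ?E) (pr1 D S ?E) (Cmp C (prd D S ?E) ?E ?E' u (pr2 D S ?E)))"
    unfolding u_alg_const using S s objs u_hom by (simp add: state_monad_defs const_state_def)
  finally show ?thesis
    unfolding Kar_def expmap_def using S objs u_hom by simp
qed

lemma full_K:
  assumes S: "S \<in> Obj C" and s: "s \<in> Hom C (one D) S"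
  shows "full C (AlgT C D S) (Kob C D S) (Kar C D S)"
  unfolding full_def
proof (intro ballI)
  fix Y Y' u assume objs: "Y \<in> Obj C" "Y' \<in> Obj C"
    and u: "u \<in> Hom (AlgT C D S) (Kob C D S Y) (Kob C D S Y')"
  have "eval_const C D S s Y Y' u \<in> Hom C Y Y'"
    using S s objs u by (simp add: eval_const_def Kob_def AlgT_Hom_iff)
  then show "\<exists>g\<in>Hom C Y Y'. Kar C D S Y Y' g = u"
    using Kar_eval_const[OF S s objs u] by blast
qed

end

section \<open>Essential surjectivity of the comparison functor\<close>

locale T_algebra = ccc_ctx C D for C :: "('o, 'a) cat" and D +
  fixes S :: 'o and s :: 'a and X :: 'o and h :: 'a
  assumes S [simp]: "S \<in> Obj C" and s [simp]: "s \<in> Hom C (one D) S"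
    and algebra: "(X, h) \<in> Obj (AlgT C D S)"
begin

abbreviation "PX \<equiv> prd D S X"
abbreviation "TX \<equiv> ex D S PX"
abbreviation "PTX \<equiv> prd D S TX"
abbreviation "TTX \<equiv> ex D S PTX"

lemma X [simp]: "X \<in> Obj C" and h [simp]: "h \<in> Hom C TX X"
  and alg_assoc: "Cmp C TTX TX X h (Tar C D S TX X h) = Cmp C TTX TX X h (multT C D S X)"
  and alg_unit [simp]: "Cmp C X TX X h (transp C D S X PX (Idt C PX)) = Idt C X"
  using algebra by (simp_all add: AlgT_Obj_iff unitT_def)

lemma alg_assoc_Cmp:
  assumes V: "V \<in> Obj C" and z: "z \<in> Hom C V TTX"
  shows "Cmp C V TX X h (Cmp C V TTX TX (Tar C D S TX X h) z) =
    Cmp C V TX X h (Cmp C V TTX TX (multT C D S X) z)"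
proof -
  have "Cmp C V TX X h (Cmp C V TTX TX (Tar C D S TX X h) z) = Cmp C V TTX X (Cmp C TTX TX X h (Tar C D S TX X h)) z"
    using V z by simp
  also have "\<dots> = Cmp C V TTX X (Cmp C TTX TX X h (multT C D S X)) z"
    by (simp only: alg_assoc)
  also have "\<dots> = Cmp C V TX X h (Cmp C V TTX TX (multT C D S X) z)"
    using V z by simp
  finally show ?thesis .
qed

lemma alg_unit_Cmp [simp]:
  assumes V: "V \<in> Obj C" and z: "z \<in> Hom C V X"
  shows "Cmp C V TX X h (transp C D S V PX
      (pair C D S X (prd D S V) (pr1 D S V) (Cmp C (prd D S V) V X z (pr2 D S V)))) = z"
proof -
  have "Cmp C V TX X h (transp C D S V PX
      (pair C D S X (prd D S V) (pr1 D S V) (Cmp C (prd D S V) V X z (pr2 D S V)))) =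
    Cmp C V X X (Cmp C X TX X h (transp C D S X PX (Idt C PX))) z"
    using V z by (simp del: alg_unit)
  also have "\<dots> = z"
    using V z by simp
  finally show ?thesis .
qed

definition collapse :: 'a where
  "collapse = Cmp C X TX X h (const_state_at C D S s X)"

lemma const_state_at_hom [simp]: "Z \<in> Obj C \<Longrightarrow> const_state_at C D S s Z \<in> Hom C Z (ex D S (prd D S Z))"
  by (simp add: const_state_at_def)

lemma collapse_hom [simp]: "collapse \<in> Hom C X X"
  by (simp add: collapse_def)

text \<open>The associativity law at x \<mapsto> (\<lambda>_. (s, \<lambda>_. (s, x))) reads collapse (collapse x) = collapse x.\<close>

lemma collapse_idem: "Cmp C X X X collapse collapse = collapse"
proof -
  let ?c = "const_state_at C D S s X" and ?cT = "const_state_at C D S s TX"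
  have "Cmp C X X X collapse collapse = Cmp C X TX X h (Cmp C X X TX ?c (Cmp C X TX X h ?c))"
    by (simp add: collapse_def)
  also have "\<dots> = Cmp C X TX X h (Cmp C X TTX TX (Tar C D S TX X h) (Cmp C X TX TTX ?cT ?c))"
    by (simp add: const_state_at_def state_monad_defs)
  also have "\<dots> = Cmp C X TX X h (Cmp C X TTX TX (multT C D S X) (Cmp C X TX TTX ?cT ?c))"
    by (rule alg_assoc_Cmp) simp_all
  also have "\<dots> = collapse"
    by (simp add: const_state_at_def state_monad_defs collapse_def)
  finally show ?thesis .
qed

text \<open>The associativity law at \<lambda>_. (a, w), for w in T X: h (\<lambda>_. (a, h w)) = h (\<lambda>_. w a).\<close>

lemma h_const_state_h:
  assumes "V \<in> Obj C" "a \<in> Hom C V S" "w \<in> Hom C V TX"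
  shows "Cmp C V TX X h (Cmp C V PX TX (const_state C D S X) (pair C D S X V a (Cmp C V TX X h w))) =
    Cmp C V TX X h (Cmp C V PX TX (const_state C D S X) (Cmp C V PTX PX (evl D S PX) (pair C D S TX V a w)))"
proof -
  have "Cmp C V TX X h (Cmp C V PX TX (const_state C D S X) (pair C D S X V a (Cmp C V TX X h w))) =
    Cmp C V TX X h (Cmp C V TTX TX (Tar C D S TX X h)
      (Cmp C V PTX TTX (const_state C D S TX) (pair C D S TX V a w)))"
    using assms by (simp add: const_state_def state_monad_defs)
  also have "\<dots> = Cmp C V TX X h (Cmp C V TTX TX (multT C D S X)
      (Cmp C V PTX TTX (const_state C D S TX) (pair C D S TX V a w)))"
    by (rule alg_assoc_Cmp) (use assms in simp_all)
  also have "\<dots> = Cmp C V TX X h (Cmp C V PX TX (const_state C D S X)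
      (Cmp C V PTX PX (evl D S PX) (pair C D S TX V a w)))"
    using assms by (simp add: const_state_def state_monad_defs)
  finally show ?thesis .
qed

lemma collapse_h_const_state:
  "Cmp C PX X X collapse (Cmp C PX TX X h (const_state C D S X)) = Cmp C PX TX X h (const_state C D S X)"
proof -
  let ?c = "const_state_at C D S s X" and ?cT = "const_state_at C D S s TX"
  have "Cmp C PX X X collapse (Cmp C PX TX X h (const_state C D S X)) =
    Cmp C PX TX X h (Cmp C PX TTX TX (Tar C D S TX X h) (Cmp C PX TX TTX ?cT (const_state C D S X)))"
    by (simp add: collapse_def const_state_at_def state_monad_defs const_state_def)
  also have "\<dots> = Cmp C PX TX X h (Cmp C PX TTX TX (multT C D S X) (Cmp C PX TX TTX ?cT (const_state C D S X)))"
    by (rule alg_assoc_Cmp) simp_all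
  also have "\<dots> = Cmp C PX TX X h (const_state C D S X)"
    by (simp add: const_state_at_def state_monad_defs const_state_def)
  finally show ?thesis .
qed

end

locale T_algebra_split = T_algebra +
  fixes Y q m
  assumes Y [simp]: "Y \<in> Obj C" and q [simp]: "q \<in> Hom C X Y" and m [simp]: "m \<in> Hom C Y X"
    and q_m: "Cmp C Y X Y q m = Idt C Y" and m_q: "Cmp C X Y X m q = collapse"
begin

abbreviation "EY \<equiv> ex D S Y"

lemma q_m_Cmp [simp]: "\<lbrakk>V \<in> Obj C; z \<in> Hom C V Y\<rbrakk> \<Longrightarrow> Cmp C V X Y q (Cmp C V Y X m z) = z"
  by (rule Cmp_retraction_cancel) (simp_all add: q_m)

lemma m_q_Cmp [simp]: "\<lbrakk>V \<in> Obj C; z \<in> Hom C V X\<rbrakk> \<Longrightarrow> Cmp C V Y X m (Cmp C V X Y q z) = Cmp C V X X collapse z"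
  by (simp flip: m_q)

lemma collapse_m_Cmp [simp]: "\<lbrakk>V \<in> Obj C; z \<in> Hom C V Y\<rbrakk> \<Longrightarrow> Cmp C V X X collapse (Cmp C V Y X m z) = Cmp C V Y X m z"
  by (metis m_q_Cmp q_m_Cmp m Cmp_hom Y X)

text \<open>Points m y are fixed by collapse, i.e. m y = h (\<lambda>_. (s, m y)); by h_const_state_h the
  state s may then be replaced by any a.\<close>

lemma h_const_state_m:
  assumes "V \<in> Obj C" "a \<in> Hom C V S" "b \<in> Hom C V Y"
  shows "Cmp C V TX X h (Cmp C V PX TX (const_state C D S X) (pair C D S X V a (Cmp C V Y X m b))) =
    Cmp C V Y X m b"
proof -
  let ?w = "Cmp C V X TX (const_state_at C D S s X) (Cmp C V Y X m b)"
  have "Cmp C V Y X m b = Cmp C V TX X h ?w"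
    using assms collapse_m_Cmp[of V b] by (simp add: collapse_def)
  then have "Cmp C V TX X h (Cmp C V PX TX (const_state C D S X) (pair C D S X V a (Cmp C V Y X m b))) =
    Cmp C V TX X h (Cmp C V PX TX (const_state C D S X) (Cmp C V PTX PX (evl D S PX) (pair C D S TX V a ?w)))"
    using h_const_state_h[of V a ?w] assms by simp
  also have "\<dots> = Cmp C V TX X h ?w"
    using assms by (simp add: const_state_def const_state_at_def)
  also have "\<dots> = Cmp C V Y X m b"
    using \<open>Cmp C V Y X m b = Cmp C V TX X h ?w\<close> by simp
  finally show ?thesis .
qed

definition \<phi> where
  "\<phi> = transp C D S X Y (Cmp C PX X Y q (Cmp C PX TX X h (const_state C D S X)))"

definition \<psi> where
  "\<psi> = Cmp C EY TX X h (transp C D S EY PX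
     (pair C D S X (prd D S EY) (pr1 D S EY) (Cmp C (prd D S EY) Y X m (evl D S Y))))"

lemma \<phi>_hom [simp]: "\<phi> \<in> Hom C X EY"
  by (simp add: \<phi>_def)

lemma \<psi>_hom [simp]: "\<psi> \<in> Hom C EY X"
  by (simp add: \<psi>_def)

lemma \<psi>_\<phi>: "Cmp C X EY X \<psi> \<phi> = Idt C X"
proof -
  let ?\<kappa> = "const_state C D S X"
  have "Cmp C X EY X \<psi> \<phi> = Cmp C X TX X h (transp C D S X PX (pair C D S X PX (pr1 D S X) (Cmp C PX TX X h ?\<kappa>)))"
    using collapse_h_const_state by (simp add: \<phi>_def \<psi>_def)
  also have "\<dots> = Cmp C X TX X h (Cmp C X TTX TX (Tar C D S TX X h) (transp C D S X PTX (pair C D S TX PX (pr1 D S X) ?\<kappa>)))"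
    by (simp add: state_monad_defs)
  also have "\<dots> = Cmp C X TX X h (Cmp C X TTX TX (multT C D S X) (transp C D S X PTX (pair C D S TX PX (pr1 D S X) ?\<kappa>)))"
    by (rule alg_assoc_Cmp) simp_all
  also have "\<dots> = Idt C X"
    by (simp add: state_monad_defs const_state_def)
  finally show ?thesis .
qed

lemma \<phi>_\<psi>: "Cmp C EY X EY \<phi> \<psi> = Idt C EY"
proof -
  let ?P = "prd D S EY"
  let ?W = "Cmp C ?P EY TX (transp C D S EY PX (pair C D S X ?P (pr1 D S EY) (Cmp C ?P Y X m (evl D S Y)))) (pr2 D S EY)"
  have W: "?W \<in> Hom C ?P TX"
    by simp
  have "Cmp C EY X EY \<phi> \<psi> = transp C D S EY Y (Cmp C ?P X Y q (Cmp C ?P TX X h (Cmp C ?P PX TX (const_state C D S X)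
      (pair C D S X ?P (pr1 D S EY) (Cmp C ?P TX X h ?W)))))"
    by (simp add: \<phi>_def \<psi>_def)
  also have "\<dots> = transp C D S EY Y (Cmp C ?P X Y q (Cmp C ?P TX X h (Cmp C ?P PX TX (const_state C D S X)
      (Cmp C ?P PTX PX (evl D S PX) (pair C D S TX ?P (pr1 D S EY) ?W)))))"
    by (simp only: h_const_state_h[of ?P "pr1 D S EY" ?W, OF _ _ W] prd_obj ex_obj S Y pr1_hom)
  also have "\<dots> = Idt C EY"
    using h_const_state_m by simp
  finally show ?thesis .
qed

lemma \<phi>_AlgT_hom: "\<phi> \<in> Hom (AlgT C D S) (X, h) (Kob C D S Y)"
proof -
  have "Cmp C TX (ex D S (prd D S EY)) EY (expmap C D S (prd D S EY) Y (evl D S Y)) (Tar C D S X EY \<phi>) =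
    transp C D S TX Y (Cmp C PTX X Y q (Cmp C PTX TX X h (Cmp C PTX PX TX (const_state C D S X)
      (Cmp C PTX PTX PX (evl D S PX) (pair C D S TX PTX (pr1 D S TX) (pr2 D S TX))))))"
    by (simp add: state_monad_defs \<phi>_def)
  also have "\<dots> = transp C D S TX Y (Cmp C PTX X Y q (Cmp C PTX TX X h (Cmp C PTX PX TX (const_state C D S X)
      (pair C D S X PTX (pr1 D S TX) (Cmp C PTX TX X h (pr2 D S TX))))))"
    by (simp only: h_const_state_h[of PTX "pr1 D S TX" "pr2 D S TX", symmetric] prd_obj ex_obj S X pr1_hom pr2_hom)
  also have "\<dots> = Cmp C TX X EY \<phi> h"
    by (simp add: \<phi>_def)
  finally show ?thesis
    by (simp add: Kob_def AlgT_Hom_iff)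
qed

lemma iso_K_algebra: "iso (AlgT C D S) (Kob C D S Y) (X, h) \<psi>"
proof -
  have \<psi>_alg: "\<psi> \<in> Hom (AlgT C D S) (Kob C D S Y) (X, h)"
    unfolding Kob_def
    by (rule inverse_AlgT_hom[OF S X _ _ _ \<phi>_AlgT_hom[unfolded Kob_def] \<psi>_hom \<psi>_\<phi> \<phi>_\<psi>])
      (simp_all add: state_monad_defs)
  show ?thesis
    unfolding iso_def AlgT_Cmp AlgT_Idt
  proof (intro conjI bexI)
    show "\<psi> \<in> Hom (AlgT C D S) (Kob C D S Y) (X, h)" by (fact \<psi>_alg)
    show "\<phi> \<in> Hom (AlgT C D S) (X, h) (Kob C D S Y)" by (fact \<phi>_AlgT_hom)
  qed (simp_all add: Kob_def \<phi>_\<psi> \<psi>_\<phi>)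
qed

end

context ccc_ctx
begin

lemma essentially_surjective_K:
  assumes S: "S \<in> Obj C" and s: "s \<in> Hom C (one D) S"
    and factorizations: "has_regular_epi_mono_factorizations C"
  shows "essentially_surjective C (AlgT C D S) (Kob C D S)"
  unfolding essentially_surjective_def
proof (intro ballI)
  fix b assume b: "b \<in> Obj (AlgT C D S)"
  obtain X h where b_eq: "b = (X, h)" by force
  interpret T_algebra C D S s X h
    using S s b unfolding b_eq by unfold_locales
  obtain Y q m where Y: "Y \<in> Obj C" and "q \<in> Hom C X Y" "m \<in> Hom C Y X"
    and "Cmp C Y X Y q m = Idt C Y" "Cmp C X Y X m q = collapse"
    using idempotent_splits[OF factorizations X collapse_hom collapse_idem] by blast
  then interpret T_algebra_split C D S s X h Y q m
    by unfold_locales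
  show "\<exists>Y\<in>Obj C. \<exists>\<phi>. iso (AlgT C D S) (Kob C D S Y) b \<phi>"
    using iso_K_algebra b_eq Y by blast
qed

end

theorem mainTheorem11:
  fixes C :: "('o, 'a) cat" and D :: "('o, 'a) ccc_data" and S :: 'o
  assumes "category C"
    and "cartesian_closed C D"
    and "has_regular_epi_mono_factorizations C"
    and "S \<in> Obj C"
    and "\<exists>s. s \<in> Hom C (one D) S"
  shows "equivalence C (AlgT C D S) (Kob C D S) (Kar C D S)"
proof -
  interpret ccc_ctx C D
    using assms(1,2) by unfold_locales
  obtain s where s: "s \<in> Hom C (one D) S"
    using assms(5) by blast
  show ?thesis
    using assms(1,3,4) s
    by (intro equivalenceI_fully_faithful_essentially_surjective category_AlgT is_functor_K
        faithful_K full_K essentially_surjective_K)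
qed

end
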